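(* For $p\ge1$, $t\in\mathbb{R}$ and $\phi\in\mathbb{R}$ let \[ \Psi_{p,t}(\phi)=t\sin\big((1-1/p)\phi\big)+2(1-t)\sin\phi\,\cos(\phi/p) =(1-t)\sin\big((1+1/p)\phi\big)+\sin\big((1-1/p)\phi\big), \] and let \[ g(p)=\min\{t\in\mathbb{R}:\ \Psi_{p,t}(\phi)\ge0 \text{ for all } 0<\phi<\pi\}. \] Then the function $g$ is continuous on $[1,\infty)$, $g(1)=1$, $g(p)=0$ for all $p\ge2$, and $g$ is strictly decreasing on $[1,2]$. In particular $g(3/2)=1/5$. *)

theory Defs
  imports "HOL-Analysis.Analysis"
begin

definition Psi :: "real \<Rightarrow> real \<Rightarrow> real \<Rightarrow> real" where
  "Psi p t \<phi> = t * sin ((1 - 1/p) * \<phi>) + 2 * (1 - t) * sin \<phi> * cos (\<phi> / p)"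

definition g :: "real \<Rightarrow> real" where
  "g p = (LEAST t. \<forall>\<phi>. 0 < \<phi> \<and> \<phi> < pi \<longrightarrow> Psi p t \<phi> \<ge> 0)"

end

(*
  Substituting phi = p * theta, Psi_{p,t} >= 0 on (0, pi) becomes
  t sin((p+1)theta) <= 2 sin(p theta) cos theta = sin((p+1)theta) + sin((p-1)theta)
  on (0, pi/p).  For theta <= pi/2 this holds for every t in [0,1]; on [pi/2, pi/p],
  which is a proper interval only for p < 2, sin((p+1)theta) < 0 and the inequality
  is a lower bound t >= threshold p theta.  Hence g(p) = 0 for p >= 2, and for
  1 < p < 2 it is the maximum of the threshold on [pi/2, pi/p], which lies in (0,1).
  The threshold is strictly decreasing in p, so g is; continuity follows from the
  continuity of a maximum over a compact parameter set.  At p = 3/2 the condition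
  becomes a polynomial inequality in s = sin(theta/2) whose extremal case is the
  double root s^2 = 5/8 of (8 s^2 - 5)^2.
*)

theory Submission
  imports Defs
begin

lemma double_sin_cos: "2 * sin (p*\<theta>) * cos \<theta> = sin ((p+1)*\<theta>) + sin ((p-1)*(\<theta>::real))"
  by (simp add: distrib_right left_diff_distrib sin_add sin_diff)

lemma sin_mult_sin_add_diff:
  "sin a * sin (b + c) - sin b * sin (a + c) = sin c * sin (a - (b::real))"
  unfolding sin_add sin_diff by algebra

lemma sin_five_times: "sin (5*x) = sin (x::real) * (16 * sin x ^ 4 - 20 * sin x ^ 2 + 5)"
proof -
  have "sin (5*x) = sin (2*(2*x) + x)" by simp
  then show ?thesis
    unfolding sin_add sin_double cos_double_sin using sin_cos_squared_add[of x] by algebra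
qed

lemma continuous_on_parametric_max:
  fixes F :: "'a::metric_space \<times> 'b::metric_space \<Rightarrow> real"
  assumes "compact S" "compact K" "continuous_on (S \<times> K) F"
    and max: "\<And>x. x \<in> S \<Longrightarrow> (\<forall>y\<in>K. F (x, y) \<le> m x) \<and> (\<exists>y\<in>K. F (x, y) = m x)"
  shows "continuous_on S m"
proof (rule uniformly_continuous_imp_continuous, unfold uniformly_continuous_on_def, intro allI impI)
  fix e :: real assume "e > 0"
  have "uniformly_continuous_on (S \<times> K) F"
    using assms by (intro compact_uniformly_continuous compact_Times)
  with \<open>e > 0\<close> obtain d where "d > 0"
    and d: "\<forall>z\<in>S \<times> K. \<forall>z'\<in>S \<times> K. dist z' z < d \<longrightarrow> dist (F z') (F z) < e"
    unfolding uniformly_continuous_on_def by blast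
  have less: "m x < m x' + e" if "x \<in> S" "x' \<in> S" "dist x' x < d" for x x'
  proof -
    obtain y where "y \<in> K" "F (x, y) = m x" using max \<open>x \<in> S\<close> by blast
    moreover have "dist (F (x', y)) (F (x, y)) < e"
      using d that \<open>y \<in> K\<close> by (auto simp: dist_Pair_Pair)
    moreover have "F (x', y) \<le> m x'" using max \<open>x' \<in> S\<close> \<open>y \<in> K\<close> by blast
    ultimately show ?thesis by (simp add: dist_real_def)
  qed
  show "\<exists>d>0. \<forall>x\<in>S. \<forall>x'\<in>S. dist x' x < d \<longrightarrow> dist (m x') (m x) < e"
  proof (intro exI[of _ d] conjI ballI impI)
    fix x x' assume "x \<in> S" "x' \<in> S" "dist x' x < d"
    with less[of x x'] less[of x' x] show "dist (m x') (m x) < e"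
      by (auto simp: dist_real_def dist_commute)
  qed (rule \<open>d > 0\<close>)
qed

definition admissible :: "real \<Rightarrow> real \<Rightarrow> bool" where
  "admissible p t \<longleftrightarrow>
     (\<forall>\<theta>. 0 < \<theta> \<and> \<theta> < pi/p \<longrightarrow> t * sin ((p+1)*\<theta>) \<le> 2 * sin (p*\<theta>) * cos \<theta>)"

lemma Psi_scaled: "p \<noteq> 0 \<Longrightarrow> Psi p t (p*\<theta>) = 2 * sin (p*\<theta>) * cos \<theta> - t * sin ((p+1)*\<theta>)"
  unfolding Psi_def by (simp add: algebra_simps sin_diff sin_add)

lemma Psi_nonneg_iff_admissible:
  assumes "p > 0"
  shows "(\<forall>\<phi>. 0 < \<phi> \<and> \<phi> < pi \<longrightarrow> Psi p t \<phi> \<ge> 0) \<longleftrightarrow> admissible p t"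
proof
  assume nonneg: "\<forall>\<phi>. 0 < \<phi> \<and> \<phi> < pi \<longrightarrow> Psi p t \<phi> \<ge> 0"
  show "admissible p t" unfolding admissible_def
  proof (intro allI impI)
    fix \<theta> assume "0 < \<theta> \<and> \<theta> < pi/p"
    with assms have "Psi p t (p*\<theta>) \<ge> 0" using nonneg by (simp add: field_simps)
    with assms show "t * sin ((p+1)*\<theta>) \<le> 2 * sin (p*\<theta>) * cos \<theta>" by (simp add: Psi_scaled)
  qed
next
  assume adm: "admissible p t"
  show "\<forall>\<phi>. 0 < \<phi> \<and> \<phi> < pi \<longrightarrow> Psi p t \<phi> \<ge> 0"
  proof (intro allI impI)
    fix \<phi> :: real assume "0 < \<phi> \<and> \<phi> < pi"
    with assms have "0 < \<phi>/p \<and> \<phi>/p < pi/p" by (simp add: divide_strict_right_mono)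
    with adm have "t * sin ((p+1)*(\<phi>/p)) \<le> 2 * sin (p*(\<phi>/p)) * cos (\<phi>/p)"
      unfolding admissible_def by blast
    with assms Psi_scaled[of p t "\<phi>/p"] show "Psi p t \<phi> \<ge> 0" by simp
  qed
qed

lemma g_eqI:
  assumes "p > 0" "admissible p m" "\<And>t. admissible p t \<Longrightarrow> m \<le> t"
  shows "g p = m"
  unfolding g_def Psi_nonneg_iff_admissible[OF \<open>p > 0\<close>] using assms(2,3) by (rule Least_equality)

lemma admissible_ineq_le_half_pi:
  assumes "1 \<le> p" "0 \<le> t" "t \<le> 1" "0 < \<theta>" "\<theta> < pi/p" "\<theta> \<le> pi/2"
  shows "t * sin ((p+1)*\<theta>) \<le> 2 * sin (p*\<theta>) * cos \<theta>"
proof -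
  have "0 < p*\<theta>" "p*\<theta> < pi" using assms by (auto simp: field_simps)
  then have "0 \<le> sin (p*\<theta>)" "0 \<le> sin ((p-1)*\<theta>)"
    using assms by (auto intro!: sin_ge_zero simp: left_diff_distrib)
  moreover have "0 \<le> cos \<theta>" using assms by (intro cos_ge_zero) auto
  ultimately have "0 \<le> 2 * sin (p*\<theta>) * cos \<theta>" "0 \<le> sin ((p-1)*\<theta>)" by simp_all
  moreover have "t * sin ((p+1)*\<theta>) \<le> max 0 (sin ((p+1)*\<theta>))"
    using assms by (cases "sin ((p+1)*\<theta>) \<ge> 0") (auto simp: mult_left_le_one_le mult_nonneg_nonpos)
  ultimately show ?thesis using double_sin_cos[of p \<theta>] by linarith
qed

lemma sin_succ_angle_neg:
  assumes "1 < p" "pi/2 \<le> \<theta>" "\<theta> \<le> pi/p"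
  shows "sin ((p+1)*\<theta>) < 0"
proof (rule sin_lt_zero)
  have "(p+1)*(pi/2) \<le> (p+1)*\<theta>" using assms by (intro mult_left_mono) auto
  moreover have "pi < (p+1)*(pi/2)" using assms by (simp add: field_simps)
  ultimately show "pi < (p+1)*\<theta>" by linarith
  have "(p+1)*\<theta> \<le> (p+1)*(pi/p)" using assms by (intro mult_left_mono) auto
  also have "\<dots> = pi + pi/p" using assms by (simp add: field_simps)
  also have "\<dots> < 2*pi" using assms by (simp add: divide_less_eq)
  finally show "(p+1)*\<theta> < 2*pi" .
qed

definition threshold :: "real \<Rightarrow> real \<Rightarrow> real" where
  "threshold p \<theta> = 2 * sin (p*\<theta>) * cos \<theta> / sin ((p+1)*\<theta>)"

lemma admissible_ineq_iff_threshold_le: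
  assumes "sin ((p+1)*\<theta>) < 0"
  shows "t * sin ((p+1)*\<theta>) \<le> 2 * sin (p*\<theta>) * cos \<theta> \<longleftrightarrow> threshold p \<theta> \<le> t"
  using assms by (simp add: threshold_def neg_divide_le_eq)

lemma continuous_on_threshold:
  "1 < p \<Longrightarrow> continuous_on {pi/2..pi/p} (threshold p)"
  unfolding threshold_def
  by (intro continuous_intros) (use sin_succ_angle_neg in fastforce)

lemma threshold_pos_less_one:
  assumes "1 < p" "pi/2 < \<theta>" "\<theta> < pi/p"
  shows "0 < threshold p \<theta>" "threshold p \<theta> < 1"
proof -
  have neg: "sin ((p+1)*\<theta>) < 0" using sin_succ_angle_neg assms by simp
  have "pi/p < pi" using assms by (simp add: divide_less_eq)
  have "0 < \<theta>" using assms pi_gt_zero by linarith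
  then have "0 < (p-1)*\<theta>" "(p-1)*\<theta> < p*\<theta>" "p*\<theta> < pi"
    using assms by (auto simp: field_simps)
  then have "0 < sin (p*\<theta>)" "0 < sin ((p-1)*\<theta>)" by (auto intro!: sin_gt_zero)
  moreover have "cos \<theta> < 0" using assms \<open>pi/p < pi\<close> by (intro cos_lt_zero_pi) auto
  ultimately have num_neg: "2 * sin (p*\<theta>) * cos \<theta> < 0"
    and "sin ((p+1)*\<theta>) < 2 * sin (p*\<theta>) * cos \<theta>"
    using double_sin_cos[of p \<theta>] mult_pos_neg[of "2 * sin (p*\<theta>)" "cos \<theta>"] by simp_all
  then show "threshold p \<theta> < 1"
    unfolding threshold_def using neg by (simp add: neg_divide_less_eq)
  show "0 < threshold p \<theta>"
    unfolding threshold_def using num_neg neg by (rule divide_neg_neg)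
qed

lemma threshold_strict_antimono:
  assumes "1 < p" "p < q" "pi/2 < \<theta>" "\<theta> < pi/q"
  shows "threshold q \<theta> < threshold p \<theta>"
proof -
  have "pi/q < pi/p" using assms by (intro divide_strict_left_mono) auto
  have "pi/q < pi" using assms by (simp add: divide_less_eq)
  with \<open>pi/q < pi/p\<close> have "sin ((p+1)*\<theta>) < 0" "sin ((q+1)*\<theta>) < 0"
    using assms by (auto intro!: sin_succ_angle_neg)
  moreover have "cos \<theta> < 0" using assms \<open>pi/q < pi\<close> by (intro cos_lt_zero_pi) auto
  moreover have "0 < sin \<theta>" using assms \<open>pi/q < pi\<close> pi_gt_zero by (intro sin_gt_zero) auto
  moreover have "0 < sin ((q-p)*\<theta>)"
  proof (rule sin_gt_zero)
    have "0 < \<theta>" using assms pi_gt_zero by linarith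
    then show "0 < (q-p)*\<theta>" using assms by simp
    have "(q-p)*\<theta> < q*\<theta>" using assms \<open>0 < \<theta>\<close> by (simp add: algebra_simps)
    also have "q*\<theta> < pi" using assms by (simp add: field_simps)
    finally show "(q-p)*\<theta> < pi" .
  qed
  moreover have "sin (q*\<theta>) * sin ((p+1)*\<theta>) - sin (p*\<theta>) * sin ((q+1)*\<theta>) = sin \<theta> * sin ((q-p)*\<theta>)"
    using sin_mult_sin_add_diff[of "q*\<theta>" "p*\<theta>" \<theta>] by (simp add: algebra_simps)
  ultimately show ?thesis
    by (simp add: threshold_def divide_less_eq field_simps mult_pos_neg mult_neg_pos)
qed

lemma admissible_iff_threshold_bound:
  assumes "1 < p" "0 \<le> t" "t \<le> 1"
  shows "admissible p t \<longleftrightarrow> (\<forall>\<theta>. pi/2 < \<theta> \<and> \<theta> < pi/p \<longrightarrow> threshold p \<theta> \<le> t)"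
proof -
  have "t * sin ((p+1)*\<theta>) \<le> 2 * sin (p*\<theta>) * cos \<theta>"
    if "0 < \<theta>" "\<theta> \<le> pi/2" "\<theta> < pi/p" for \<theta>
    using assms that by (intro admissible_ineq_le_half_pi) auto
  moreover have "t * sin ((p+1)*\<theta>) \<le> 2 * sin (p*\<theta>) * cos \<theta> \<longleftrightarrow> threshold p \<theta> \<le> t"
    if "pi/2 < \<theta>" "\<theta> < pi/p" for \<theta>
    using assms that by (intro admissible_ineq_iff_threshold_le sin_succ_angle_neg) auto
  moreover have "0 < \<theta>" if "pi/2 < \<theta>" for \<theta> using that pi_gt_zero by linarith
  ultimately show ?thesis unfolding admissible_def by (meson not_less)
qed

lemma g_eq_max_threshold:
  assumes "1 < p" "p < 2"
  obtains \<theta>\<^sub>0 where "pi/2 < \<theta>\<^sub>0" "\<theta>\<^sub>0 < pi/p" "g p = threshold p \<theta>\<^sub>0"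
    and "\<And>\<theta>. \<theta> \<in> {pi/2..pi/p} \<Longrightarrow> threshold p \<theta> \<le> g p"
proof -
  have "pi/2 < pi/p" using assms by (intro divide_strict_left_mono) auto
  then obtain \<theta>\<^sub>0 where \<theta>\<^sub>0: "\<theta>\<^sub>0 \<in> {pi/2..pi/p}"
    and max: "\<And>\<theta>. \<theta> \<in> {pi/2..pi/p} \<Longrightarrow> threshold p \<theta> \<le> threshold p \<theta>\<^sub>0"
    using continuous_attains_sup[OF compact_Icc _ continuous_on_threshold[OF \<open>1 < p\<close>]] by auto
  obtain \<theta>\<^sub>1 where "pi/2 < \<theta>\<^sub>1" "\<theta>\<^sub>1 < pi/p" using \<open>pi/2 < pi/p\<close> dense by blast
  then have "0 < threshold p \<theta>\<^sub>1" "threshold p \<theta>\<^sub>1 \<le> threshold p \<theta>\<^sub>0"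
    using threshold_pos_less_one[OF \<open>1 < p\<close>] max[of \<theta>\<^sub>1] by auto
  then have "0 < threshold p \<theta>\<^sub>0" by linarith
  moreover have "threshold p (pi/2) = 0" "threshold p (pi/p) = 0"
    using assms by (simp_all add: threshold_def)
  ultimately have "\<theta>\<^sub>0 \<noteq> pi/2" "\<theta>\<^sub>0 \<noteq> pi/p" by (metis less_irrefl)+
  with \<theta>\<^sub>0 have interior: "pi/2 < \<theta>\<^sub>0" "\<theta>\<^sub>0 < pi/p" by auto
  have "admissible p (threshold p \<theta>\<^sub>0)"
    using assms max threshold_pos_less_one[OF _ interior]
    by (subst admissible_iff_threshold_bound) auto
  moreover have "threshold p \<theta>\<^sub>0 \<le> t" if "admissible p t" for t
  proof -
    have "0 < \<theta>\<^sub>0" using interior pi_gt_zero by linarith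
    then show ?thesis
      using that interior assms
      by (subst admissible_ineq_iff_threshold_le[symmetric]) (auto intro: sin_succ_angle_neg simp: admissible_def)
  qed
  ultimately have "g p = threshold p \<theta>\<^sub>0" using assms by (intro g_eqI) auto
  with interior max that show ?thesis by auto
qed

lemma threshold_le_g:
  assumes "1 < p" "p < 2" "pi/2 \<le> \<theta>" "\<theta> \<le> pi/p"
  shows "threshold p \<theta> \<le> g p"
  by (rule g_eq_max_threshold[OF assms(1,2)]) (use assms(3,4) in auto)

lemma g_pos_less_one:
  assumes "1 < p" "p < 2"
  shows "0 < g p" "g p < 1"
proof -
  obtain \<theta>\<^sub>0 where "pi/2 < \<theta>\<^sub>0" "\<theta>\<^sub>0 < pi/p" "g p = threshold p \<theta>\<^sub>0"
    using g_eq_max_threshold[OF assms] by blast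
  then show "0 < g p" "g p < 1" using threshold_pos_less_one[OF \<open>1 < p\<close>] by auto
qed

lemma admissible_nonneg:
  assumes "1 < p" "admissible p t"
  shows "0 \<le> t"
proof (rule ccontr)
  \<comment> \<open>Near \<open>\<theta> = pi/p\<close> the inequality tends to \<open>0 \<le> t * sin (pi/p)\<close>.\<close>
  assume "\<not> 0 \<le> t"
  define f where "f \<theta> = 2 * sin (p*\<theta>) * cos \<theta> - t * sin ((p+1)*\<theta>)" for \<theta>
  have "(p+1)*(pi/p) = pi/p + pi" "p*(pi/p) = pi" using assms by (simp_all add: field_simps)
  then have "f (pi/p) = t * sin (pi/p)" by (simp add: f_def)
  moreover have "0 < sin (pi/p)" using assms by (intro sin_gt_zero) (auto simp: divide_less_eq)
  ultimately have "f (pi/p) < 0" using \<open>\<not> 0 \<le> t\<close> by (simp add: mult_neg_pos)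
  moreover have "(f \<longlongrightarrow> f (pi/p)) (at_left (pi/p))" unfolding f_def by (intro tendsto_intros)
  ultimately have "eventually (\<lambda>\<theta>. f \<theta> < 0) (at_left (pi/p))" by (rule order_tendstoD(2)[rotated])
  moreover have "eventually (\<lambda>\<theta>. \<theta> \<in> {0<..<pi/p}) (at_left (pi/p))"
    using assms by (intro eventually_at_left_real) simp
  ultimately obtain \<theta> where "f \<theta> < 0" "0 < \<theta>" "\<theta> < pi/p"
    using eventually_happens[OF eventually_conj] by fastforce
  with assms show False by (auto simp: admissible_def f_def)
qed

lemma g_ge_two: "2 \<le> p \<Longrightarrow> g p = 0"
proof (rule g_eqI)
  assume "2 \<le> p"
  then have "pi/p \<le> pi/2" by (intro divide_left_mono) auto
  with \<open>2 \<le> p\<close> show "admissible p 0"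
    unfolding admissible_def
    by (intro allI impI admissible_ineq_le_half_pi) linarith+
  show "0 \<le> t" if "admissible p t" for t using admissible_nonneg[OF _ that] \<open>2 \<le> p\<close> by simp
qed simp

lemma g_one: "g 1 = 1"
proof (rule g_eqI)
  show "admissible 1 1" by (simp add: admissible_def sin_double)
  show "1 \<le> t" if "admissible 1 t" for t
  proof -
    have "0 < 3/4*pi \<and> 3/4*pi < pi/1" by simp
    then have "t * sin ((1+1)*(3/4*pi)) \<le> 2 * sin (1*(3/4*pi)) * cos (3/4*pi)"
      using that unfolding admissible_def by blast
    then have "t * sin (2*(3/4*pi)) \<le> sin (2*(3/4*pi))" by (simp only: one_add_one mult_1 sin_double)
    then show ?thesis using sin_3over2_pi by simp
  qed
qed simp

lemma admissible_three_halves_iff: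
  "admissible (3/2) t \<longleftrightarrow> (\<forall>x. 0 < x \<and> x < pi/3 \<longrightarrow> (t - 1) * sin (5*x) \<le> sin x)"
proof -
  have "admissible (3/2) t \<longleftrightarrow> (\<forall>x. 0 < 2*x \<and> 2*x < pi/(3/2) \<longrightarrow>
         t * sin ((3/2+1)*(2*x)) \<le> 2 * sin (3/2*(2*x)) * cos (2*x))"
    unfolding admissible_def by (metis field_sum_of_halves mult_2)
  moreover have "t * sin ((3/2+1)*(2*x)) \<le> 2 * sin (3/2*(2*x)) * cos (2*x) \<longleftrightarrow>
        (t - 1) * sin (5*x) \<le> sin x" for x
    using double_sin_cos[of "3/2" "2*x"] by (simp add: algebra_simps)
  ultimately show ?thesis by (simp add: mult.commute)
qed

lemma g_three_halves: "g (3/2) = 1/5"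
proof (rule g_eqI)
  show "admissible (3/2) (1/5)"
    unfolding admissible_three_halves_iff
  proof (intro allI impI)
    fix x :: real assume "0 < x \<and> x < pi/3"
    then have "0 \<le> sin x / 5 * (8 * sin x ^ 2 - 5)^2" by (simp add: sin_ge_zero)
    moreover have "sin x - (1/5 - 1) * sin (5*x) = sin x / 5 * (8 * sin x ^ 2 - 5)^2"
      unfolding sin_five_times by algebra
    ultimately show "(1/5 - 1) * sin (5*x) \<le> sin x" by linarith
  qed
  show "1/5 \<le> t" if "admissible (3/2) t" for t
  proof -
    \<comment> \<open>The admissibility proof above is sharp where \<open>8 * sin x ^ 2 = 5\<close>.\<close>
    define s where "s = sqrt (5/8::real)"
    have s: "0 < s" "s < 1" "s < sqrt 3 / 2" "s^2 = 5/8"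
      unfolding s_def by (auto simp: real_less_rsqrt)
    define x where "x = arcsin s"
    have "sin x = s" using s by (simp add: x_def)
    have "0 < x" using s by (simp add: x_def arcsin_less_mono[of 0 s, simplified])
    have "sqrt 3 / 2 \<le> 1" by (simp add: real_sqrt_le_iff[of 3 4, simplified])
    then have "x < arcsin (sin (pi/3))" unfolding x_def sin_60 using s by (intro arcsin_less_arcsin) auto
    also have "arcsin (sin (pi/3)) = pi/3" using pi_gt_zero by (intro arcsin_sin) linarith+
    finally have "x < pi/3" .
    have "16 * s^4 - 20 * s^2 + 5 = -5/4"
    proof -
      have "s^4 = (s^2)^2" by simp
      then show ?thesis unfolding \<open>s^2 = 5/8\<close> by (simp add: power2_eq_square)
    qed
    then have "sin (5*x) = -5/4 * s" by (simp add: sin_five_times \<open>sin x = s\<close>)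
    moreover have "(t - 1) * sin (5*x) \<le> sin x"
      using \<open>0 < x\<close> \<open>x < pi/3\<close> that by (simp add: admissible_three_halves_iff)
    ultimately have "s * (-5/4 * (t - 1)) \<le> s * 1" using \<open>sin x = s\<close> by (simp add: mult_ac)
    then have "-5/4 * (t - 1) \<le> 1" using \<open>0 < s\<close> by (simp only: mult_le_cancel_left_pos)
    then show ?thesis by simp
  qed
qed simp

text \<open>Rescaling \<open>[pi/2, pi/p]\<close> to \<open>[0, 1]\<close> makes the set over which the maximum is taken
  independent of \<open>p\<close>.\<close>

lemma g_eq_max_threshold_rescaled:
  assumes "1 < p" "p \<le> 2"
  shows "(\<forall>u\<in>{0..1}. threshold p (pi/2 + u * (pi/p - pi/2)) \<le> g p) \<and>
         (\<exists>u\<in>{0..1}. threshold p (pi/2 + u * (pi/p - pi/2)) = g p)"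
proof (cases "p = 2")
  case True
  then show ?thesis by (auto simp: g_ge_two threshold_def intro: bexI[of _ 0])
next
  case False
  with assms have "p < 2" by simp
  with assms obtain \<theta>\<^sub>0 where \<theta>\<^sub>0: "pi/2 < \<theta>\<^sub>0" "\<theta>\<^sub>0 < pi/p" "g p = threshold p \<theta>\<^sub>0"
    using g_eq_max_threshold by blast
  have max: "threshold p \<theta> \<le> g p" if "\<theta> \<in> {pi/2..pi/p}" for \<theta>
    using that assms \<open>p < 2\<close> threshold_le_g by simp
  define L where "L = pi/p - pi/2"
  have "L > 0" using \<theta>\<^sub>0 unfolding L_def by linarith
  have "pi/2 + u * L \<in> {pi/2..pi/p}" if "u \<in> {0..1}" for u
  proof -
    have "0 \<le> u * L" "u * L \<le> L" using that \<open>L > 0\<close> mult_left_le_one_le[of L u] by auto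
    then show ?thesis unfolding L_def atLeastAtMost_iff by linarith
  qed
  moreover have "(\<theta>\<^sub>0 - pi/2) / L \<in> {0..1}" "pi/2 + (\<theta>\<^sub>0 - pi/2) / L * L = \<theta>\<^sub>0"
    using \<theta>\<^sub>0 \<open>L > 0\<close> by (auto simp: L_def)
  ultimately show ?thesis using max \<theta>\<^sub>0(3) unfolding L_def by metis
qed

lemma continuous_on_threshold_rescaled:
  assumes "1 < p\<^sub>0"
  shows "continuous_on ({p\<^sub>0..2} \<times> {0..1})
           (\<lambda>(p, u). threshold p (pi/2 + u * (pi/p - pi/2)))"
proof -
  have "sin ((p+1) * (pi/2 + u * (pi/p - pi/2))) \<noteq> 0"
    if "p \<in> {p\<^sub>0..2}" "u \<in> {0..1}" for p u :: real
  proof -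
    have "pi/2 \<le> pi/p" using that assms by (intro divide_left_mono) auto
    then have "0 \<le> u * (pi/p - pi/2)" "u * (pi/p - pi/2) \<le> pi/p - pi/2"
      using that mult_left_le_one_le[of "pi/p - pi/2" u] by auto
    then have "sin ((p+1) * (pi/2 + u * (pi/p - pi/2))) < 0"
      using that assms by (intro sin_succ_angle_neg) auto
    then show ?thesis by simp
  qed
  then show ?thesis
    unfolding threshold_def case_prod_unfold using assms
    by (intro continuous_intros) auto
qed

lemma continuous_on_g_Icc: "1 < p\<^sub>0 \<Longrightarrow> continuous_on {p\<^sub>0..2} g"
  by (rule continuous_on_parametric_max[OF compact_Icc compact_Icc continuous_on_threshold_rescaled])
     (auto simp: g_eq_max_threshold_rescaled)

text \<open>At \<open>p = 1\<close> the interval reaches \<open>pi\<close>, where \<open>sin (2 * \<theta>)\<close> vanishes, so instead \<open>g\<close>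
  is squeezed between its lower bound \<open>threshold p (3/4 * pi)\<close> and \<open>1\<close>.\<close>

lemma g_tendsto_at_one: "(g \<longlongrightarrow> 1) (at 1 within {1..2})"
proof (rule tendsto_sandwich)
  let ?a = "3/4 * pi"
  have "sin (2 * ?a) \<noteq> 0" using sin_3over2_pi by simp
  then have "isCont (\<lambda>p. threshold p ?a) 1" unfolding threshold_def by (intro continuous_intros) auto
  moreover have "threshold 1 ?a = 1" using \<open>sin (2 * ?a) \<noteq> 0\<close> sin_double[of ?a] by (simp add: threshold_def)
  ultimately show "((\<lambda>p. threshold p ?a) \<longlongrightarrow> 1) (at 1 within {1..2})"
    by (metis continuous_at_imp_continuous_at_within continuous_within)
  have "threshold p ?a \<le> g p \<and> g p \<le> 1" if "1 < p" "p < 4/3" for p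
  proof -
    have "?a \<le> pi/p" using that by (simp add: field_simps)
    with that show ?thesis using threshold_le_g[of p ?a] g_pos_less_one[of p] by simp
  qed
  moreover have "eventually (\<lambda>p::real. 1 < p \<and> p < 4/3) (at 1 within {1..2})"
    unfolding eventually_at by (intro exI[of _ "1/3"]) (auto simp: dist_real_def)
  ultimately show "eventually (\<lambda>p. threshold p ?a \<le> g p) (at 1 within {1..2})"
    and "eventually (\<lambda>p. g p \<le> 1) (at 1 within {1..2})"
    by (auto elim: eventually_mono)
qed simp

lemma continuous_on_g_one_two: "continuous_on {1..2} g"
  unfolding continuous_on_eq_continuous_within
proof
  fix p :: real assume p: "p \<in> {1..2}"
  show "continuous (at p within {1..2}) g"
  proof (cases "p = 1")
    case True
    then show ?thesis using g_tendsto_at_one g_one by (simp add: continuous_within)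
  next
    case False
    define p\<^sub>0 where "p\<^sub>0 = (1 + p) / 2"
    have "1 < p\<^sub>0" "p\<^sub>0 < p" using p False by (auto simp: p\<^sub>0_def)
    have "at p within {1..2} = at p within {p\<^sub>0..2}"
      using \<open>1 < p\<^sub>0\<close> \<open>p\<^sub>0 < p\<close> by (intro at_within_nhd[of _ "{p\<^sub>0<..}"]) auto
    moreover have "continuous (at p within {p\<^sub>0..2}) g"
      using continuous_on_g_Icc[OF \<open>1 < p\<^sub>0\<close>] p \<open>p\<^sub>0 < p\<close>
      by (simp add: continuous_on_eq_continuous_within)
    ultimately show ?thesis by simp
  qed
qed

lemma g_strict_antimono:
  assumes "p \<in> {1..2}" "q \<in> {1..2}" "p < q"
  shows "g q < g p"
proof (cases "q = 2")
  case True
  then show ?thesis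
    using assms g_one g_ge_two g_pos_less_one[of p] by (cases "p = 1") auto
next
  case False
  with assms have "1 < q" "q < 2" by auto
  then obtain \<theta>\<^sub>0 where \<theta>\<^sub>0: "pi/2 < \<theta>\<^sub>0" "\<theta>\<^sub>0 < pi/q" "g q = threshold q \<theta>\<^sub>0"
    using g_eq_max_threshold by blast
  show ?thesis
  proof (cases "p = 1")
    case True
    then show ?thesis using \<open>1 < q\<close> \<open>q < 2\<close> g_one g_pos_less_one[of q] by simp
  next
    case False
    then have "1 < p" "p < 2" using assms by auto
    moreover have "pi/q < pi/p" using assms \<open>1 < p\<close> by (intro divide_strict_left_mono) auto
    ultimately have "threshold p \<theta>\<^sub>0 \<le> g p"
      using \<theta>\<^sub>0 by (intro threshold_le_g) auto
    moreover have "threshold q \<theta>\<^sub>0 < threshold p \<theta>\<^sub>0"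
      using \<theta>\<^sub>0 \<open>1 < p\<close> assms by (intro threshold_strict_antimono) auto
    ultimately show ?thesis using \<theta>\<^sub>0 by simp
  qed
qed

theorem mainTheorem2:
  shows "continuous_on {1..} g \<and> g 1 = 1 \<and> (\<forall>p\<ge>2. g p = 0)
     \<and> (\<forall>x\<in>{1..2}. \<forall>y\<in>{1..2}. x < y \<longrightarrow> g y < g x)
     \<and> g (3/2) = 1/5"
proof (intro conjI)
  have "continuous_on {2..} g"
    using continuous_on_const[of "{2..}" "0::real"] by (rule continuous_on_eq) (simp add: g_ge_two)
  moreover have "{1..} = {1..2} \<union> {2::real..}" by auto
  ultimately show "continuous_on {1..} g"
    using continuous_on_closed_Un[OF closed_atLeastAtMost closed_atLeast continuous_on_g_one_two] by simp
qed (auto simp: g_one g_ge_two g_three_halves g_strict_antimono)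

end
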